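(* For every deterministic algorithm which, given a set $P$ of $n$ elements, an upper bound $w$ on the width, and access to a query oracle for a poset $(P,\succ)$ of width at most $w$, outputs the set of minimal elements, there is a poset of width at most $w$ on $P$ (equivalently, an adversary answering queries consistently with some such poset) for which the algorithm makes at least $\frac{w+1}{2}n-w$ queries.
   Context: A poset $(P,\succ)$ consists of a set $P$ and an irreflexive, transitive relation $\succ$. Elements $a,b$ are incomparable if neither $a\succ b$ nor $b\succ a$; the width is the maximum size of a set of mutually incomparable elements. An element $a$ is minimal if there is no $b$ with $a\succ b$. A query oracle answers a query on $(x,y)$ by reporting whether $x\succ y$, $y\succ x$, or they are incomparable. *)

theory Defs
  imports Complex_Main
begin

text \<open>A strict poset on a carrier P: R x y means x \<succ> y. The relation lives on P only.\<close>
definition poset_on :: "'a set \<Rightarrow> ('a \<Rightarrow> 'a \<Rightarrow> bool) \<Rightarrow> bool" where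
  "poset_on P R \<longleftrightarrow> (\<forall>x y. R x y \<longrightarrow> x \<in> P \<and> y \<in> P)
     \<and> (\<forall>x\<in>P. \<not> R x x)
     \<and> (\<forall>x y z. R x y \<longrightarrow> R y z \<longrightarrow> R x z)"

definition incomparable :: "('a \<Rightarrow> 'a \<Rightarrow> bool) \<Rightarrow> 'a \<Rightarrow> 'a \<Rightarrow> bool" where
  "incomparable R x y \<longleftrightarrow> \<not> R x y \<and> \<not> R y x"

definition antichain_in :: "'a set \<Rightarrow> ('a \<Rightarrow> 'a \<Rightarrow> bool) \<Rightarrow> 'a set \<Rightarrow> bool" where
  "antichain_in P R A \<longleftrightarrow> A \<subseteq> P \<and> (\<forall>x\<in>A. \<forall>y\<in>A. x \<noteq> y \<longrightarrow> incomparable R x y)"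

definition width :: "'a set \<Rightarrow> ('a \<Rightarrow> 'a \<Rightarrow> bool) \<Rightarrow> nat" where
  "width P R = Max {card A | A. antichain_in P R A}"

definition minimal_elements :: "'a set \<Rightarrow> ('a \<Rightarrow> 'a \<Rightarrow> bool) \<Rightarrow> 'a set" where
  "minimal_elements P R = {a \<in> P. \<not> (\<exists>b. R a b)}"

datatype answer = Gt | Lt | Inc

definition answer_of :: "('a \<Rightarrow> 'a \<Rightarrow> bool) \<Rightarrow> 'a \<Rightarrow> 'a \<Rightarrow> answer" where
  "answer_of R x y = (if R x y then Gt else if R y x then Lt else Inc)"

text \<open>A deterministic query algorithm (for fixed P and w) as a decision tree:
  either output a set, or query a pair and continue depending on the answer.\<close>
datatype 'a qtree = Output "'a set" | Query 'a 'a "answer \<Rightarrow> 'a qtree"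

primrec run :: "'a qtree \<Rightarrow> ('a \<Rightarrow> 'a \<Rightarrow> bool) \<Rightarrow> 'a set \<times> nat" where
  "run (Output S) R = (S, 0)"
| "run (Query x y k) R = (let r = run (k (answer_of R x y)) R in (fst r, Suc (snd r)))"

end

theory Submission
  imports Defs "HOL-Library.Countable_Set"
begin

text \<open>The adversary keeps the elements in at most w chains, chosen lazily through a partial
  colouring. A query involving an uncoloured element is answered "incomparable" and recorded as
  an edge of a graph; an element is coloured once it has w - 1 neighbours, with a colour not
  used so far if there is one, and otherwise with one avoiding the colours of its neighbours.
  Two elements of the same colour are comparable, the later coloured one being larger, and that
  one is marked as non-minimal. At the end a greedy colouring of the graph extends the partial
  one, so the answers are consistent with a poset of width at most w. Each query raises the
  potential (sum of degrees) + 2 (number of marked elements) by at most 2. Since the algorithm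
  is correct, it cannot stop before every element has w - 1 neighbours and every non-minimal
  element is marked; as at most w elements are minimal, the potential is then at least
  n (w - 1) + 2 (n - w).\<close>

section \<open>Posets and chain orders\<close>

lemma finite_antichain_cards:
  assumes "finite P"
  shows "finite {card A | A. antichain_in P R A}"
proof (rule finite_subset)
  show "{card A | A. antichain_in P R A} \<subseteq> {..card P}"
    using assms by (auto simp: antichain_in_def intro: card_mono)
qed simp

lemma width_leI:
  assumes "finite P" and "\<And>A. antichain_in P R A \<Longrightarrow> card A \<le> k"
  shows "width P R \<le> k"
proof -
  have "antichain_in P R {}" by (simp add: antichain_in_def)
  then show ?thesis
    unfolding width_def using assms finite_antichain_cards[OF assms(1)]
    by (subst Max_le_iff) auto
qed

lemma card_le_width:
  assumes "finite P" and "antichain_in P R A"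
  shows "card A \<le> width P R"
  unfolding width_def using assms finite_antichain_cards[OF assms(1)] by (intro Max_ge) auto

lemma width_le_card: "finite P \<Longrightarrow> width P R \<le> card P"
  by (rule width_leI) (auto simp: antichain_in_def intro: card_mono)

lemma card_minimal_elements_le_width:
  assumes "finite P"
  shows "card (minimal_elements P R) \<le> width P R"
proof (rule card_le_width[OF assms])
  show "antichain_in P R (minimal_elements P R)"
    unfolding antichain_in_def minimal_elements_def incomparable_def by auto
qed

lemma poset_on_converse: "poset_on P R \<Longrightarrow> poset_on P (\<lambda>x y. R y x)"
  unfolding poset_on_def by blast

lemma width_converse: "width P (\<lambda>x y. R y x) = width P R"
proof -
  have "antichain_in P (\<lambda>x y. R y x) = antichain_in P R"
    unfolding antichain_in_def incomparable_def by blast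
  then show ?thesis by (simp add: width_def)
qed

lemma exists_minimal_below:
  assumes "finite P" and "poset_on P R" and "a \<in> P"
  obtains m where "m \<in> minimal_elements P R" and "m = a \<or> R a m"
proof -
  let ?below = "\<lambda>b. {c. R b c}"
  obtain m where m: "m = a \<or> R a m"
    and least: "\<And>b. b = a \<or> R a b \<Longrightarrow> card (?below m) \<le> card (?below b)"
    using ex_has_least_nat[of "\<lambda>b. b = a \<or> R a b" a "\<lambda>b. card (?below b)"] by blast
  have mP: "m \<in> P" using m assms(2,3) by (auto simp: poset_on_def)
  have "\<not> R m c" for c
  proof
    assume mc: "R m c"
    have fin: "finite (?below m)"
      using assms(1,2) by (auto simp: poset_on_def intro: finite_subset)
    have "?below c \<subseteq> ?below m" and "c \<in> ?below m - ?below c"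
      using mc assms(2) unfolding poset_on_def by blast+
    then have "?below c \<subset> ?below m" by blast
    then have "card (?below c) < card (?below m)" by (rule psubset_card_mono[OF fin])
    moreover have "R a c" using m mc assms(2) unfolding poset_on_def by blast
    ultimately show False using least[of c] by (simp add: not_le[symmetric])
  qed
  then show ?thesis using that mP m by (auto simp: minimal_elements_def)
qed

lemma no_relation_if_minimal_elements_converse:
  assumes "finite P" and "poset_on P R"
    and same: "minimal_elements P (\<lambda>x y. R y x) = minimal_elements P R"
  shows "\<not> R a b"
proof
  assume ab: "R a b"
  then have "b \<in> P" using assms(2) by (auto simp: poset_on_def)
  then obtain m where m: "m \<in> minimal_elements P R" and "m = b \<or> R b m"
    using exists_minimal_below[OF assms(1,2)] by blast
  then have "R a m" using ab assms(2) unfolding poset_on_def by blast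
  then have "m \<notin> minimal_elements P (\<lambda>x y. R y x)" by (auto simp: minimal_elements_def)
  with m same show False by simp
qed

definition chain_order :: "'a set \<Rightarrow> ('a \<Rightarrow> nat) \<Rightarrow> ('a \<Rightarrow> nat) \<Rightarrow> 'a \<Rightarrow> 'a \<Rightarrow> bool" where
  "chain_order P f key u v \<longleftrightarrow> u \<in> P \<and> v \<in> P \<and> f u = f v \<and> key v < key u"

lemma poset_on_chain_order: "poset_on P (chain_order P f key)"
  unfolding poset_on_def chain_order_def by auto

lemma width_chain_order_le:
  assumes "finite P" and "inj_on key P" and "\<And>v. v \<in> P \<Longrightarrow> f v < w"
  shows "width P (chain_order P f key) \<le> w"
proof (rule width_leI[OF assms(1)])
  fix A assume A: "antichain_in P (chain_order P f key) A"
  have "inj_on f A"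
  proof (rule inj_onI)
    fix u v assume "u \<in> A" "v \<in> A" "f u = f v"
    with A assms(2) show "u = v"
      unfolding antichain_in_def incomparable_def chain_order_def inj_on_def
      by (metis linorder_neqE_nat subsetD)
  qed
  moreover have "f ` A \<subseteq> {..<w}" using A assms(3) by (auto simp: antichain_in_def)
  ultimately show "card A \<le> w"
    by (metis card_image card_lessThan card_mono finite_lessThan)
qed

definition lower_key :: "'a \<Rightarrow> ('a \<Rightarrow> nat) \<Rightarrow> 'a \<Rightarrow> nat" where
  "lower_key x key v = (if v = x then 0 else Suc (key v))"

lemma inj_on_lower_key: "inj_on key P \<Longrightarrow> inj_on (lower_key x key) P"
  by (auto simp: inj_on_def lower_key_def)

lemma minimal_elements_lower_key:
  "x \<in> P \<Longrightarrow> x \<in> minimal_elements P (chain_order P f (lower_key x key))"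
  by (auto simp: minimal_elements_def chain_order_def lower_key_def)

lemma answer_of_chain_order_lower_key:
  assumes "inj_on key P"
    and "a = x \<Longrightarrow> \<not> chain_order P f key x b" and "b = x \<Longrightarrow> \<not> chain_order P f key x a"
  shows "answer_of (chain_order P f (lower_key x key)) a b = answer_of (chain_order P f key) a b"
proof -
  have "chain_order P f (lower_key x key) u v = chain_order P f key u v"
    if "u = x \<Longrightarrow> \<not> chain_order P f key x v" "v = x \<Longrightarrow> \<not> chain_order P f key x u" for u v
  proof (cases "u = x \<or> v = x")
    case True
    with that assms(1) show ?thesis
      by (auto simp: chain_order_def lower_key_def inj_on_def) (metis linorder_neqE_nat)
  qed (auto simp: chain_order_def lower_key_def)
  from this[of a b] this[of b a] assms(2,3) show ?thesis
    by (simp add: answer_of_def)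
qed

section \<open>Decision trees played against an adversary\<close>

definition consistent :: "('a \<times> 'a \<times> answer) list \<Rightarrow> ('a \<Rightarrow> 'a \<Rightarrow> bool) \<Rightarrow> bool" where
  "consistent h R \<longleftrightarrow> (\<forall>(x, y, a) \<in> set h. answer_of R x y = a)"

primrec play :: "('s \<Rightarrow> 'a \<Rightarrow> 'a \<Rightarrow> answer \<times> 's) \<Rightarrow> 'a qtree \<Rightarrow> 's
    \<Rightarrow> 'a set \<times> ('a \<times> 'a \<times> answer) list \<times> 's" where
  "play respond (Output S) s = (S, [], s)"
| "play respond (Query x y k) s =
    (let (a, s') = respond s x y; (S, h, sf) = play respond (k a) s' in (S, (x, y, a) # h, sf))"

lemma run_play:
  assumes "play respond T s = (S, h, sf)" and "consistent h R"
  shows "run T R = (S, length h)"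
  using assms
proof (induction T arbitrary: s h)
  case (Query x y k)
  obtain a s' where as: "respond s x y = (a, s')" by fastforce
  obtain h' where h: "h = (x, y, a) # h'" and rest: "play respond (k a) s' = (S, h', sf)"
    using Query.prems(1) as by (auto split: prod.splits)
  have "answer_of R x y = a" and "consistent h' R"
    using Query.prems(2) h by (auto simp: consistent_def)
  with Query.IH[OF _ rest] h show ?case by simp
qed simp

lemma play_invariant:
  assumes respond: "\<And>s x y a s'. I s \<Longrightarrow> respond s x y = (a, s') \<Longrightarrow> I s' \<and> le s s'"
    and "reflp le" and "transp le"
    and "I s" and "play respond T s = (S, h, sf)"
  shows "I sf \<and> le s sf \<and>
    (\<forall>(x, y, a) \<in> set h. \<exists>s0 s'. I s0 \<and> respond s0 x y = (a, s') \<and> le s' sf)"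
  using assms(4,5)
proof (induction T arbitrary: s h)
  case (Output S')
  then show ?case using \<open>reflp le\<close> by (simp add: reflpD)
next
  case (Query x y k)
  obtain a s' where as: "respond s x y = (a, s')" by fastforce
  obtain h' where h: "h = (x, y, a) # h'" and rest: "play respond (k a) s' = (S, h', sf)"
    using Query.prems(2) as by (auto split: prod.splits)
  have s': "I s'" "le s s'" using respond[OF Query.prems(1) as] by auto
  from Query.IH[OF _ s'(1) rest] have "I sf" "le s' sf"
    and "\<forall>(x, y, a) \<in> set h'. \<exists>s0 s'. I s0 \<and> respond s0 x y = (a, s') \<and> le s' sf"
    by auto
  with s' h as Query.prems(1) \<open>transp le\<close> show ?case by (auto dest: transpD)
qed

lemma play_potential:
  assumes respond: "\<And>s x y. I s \<Longrightarrow> I (snd (respond s x y)) \<and> pot (snd (respond s x y)) \<le> pot s + d"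
    and "I s" and "play respond T s = (S, h, sf)"
  shows "pot sf \<le> pot s + d * length h"
  using assms(2,3)
proof (induction T arbitrary: s h)
  case (Query x y k)
  obtain a s' where as: "respond s x y = (a, s')" by fastforce
  obtain h' where h: "h = (x, y, a) # h'" and rest: "play respond (k a) s' = (S, h', sf)"
    using Query.prems(2) as by (auto split: prod.splits)
  have "I s'" "pot s' \<le> pot s + d" using respond[OF Query.prems(1), of x y] as by auto
  with Query.IH[OF _ _ rest] h show ?case by fastforce
qed simp

section \<open>Greedy colouring\<close>

lemma exists_colour_avoiding:
  fixes g :: "'a \<Rightarrow> nat option"
  assumes "finite N" and "card N < w"
  obtains c where "c < w" and "\<And>u. u \<in> N \<Longrightarrow> g u \<noteq> Some c"
proof -
  let ?C = "{c. \<exists>u\<in>N. g u = Some c}"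
  have sub: "?C \<subseteq> (\<lambda>u. the (g u)) ` N" by force
  have fin: "finite ?C" using finite_subset[OF sub finite_imageI[OF assms(1)]] .
  have "card ?C \<le> card N"
    using card_mono[OF finite_imageI[OF assms(1)] sub] card_image_le[OF assms(1), of "\<lambda>u. the (g u)"] by linarith
  then have lt: "card ?C < card {..<w}" using assms(2) by simp
  have "\<not> {..<w} \<subseteq> ?C"
  proof
    assume "{..<w} \<subseteq> ?C"
    then have "card {..<w} \<le> card ?C" by (rule card_mono[OF fin])
    with lt show False by simp
  qed
  then show ?thesis using that by auto
qed

lemma proper_colouring_extends:
  fixes E :: "'a \<Rightarrow> 'a set" and g :: "'a \<Rightarrow> nat option"
  assumes "finite U" and "finite P"
    and E: "\<And>v. E v \<subseteq> P - {v}" "\<And>u v. u \<in> E v \<Longrightarrow> v \<in> E u"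
    and g_range: "\<And>v c. g v = Some c \<Longrightarrow> c < w"
    and g_proper: "\<And>u v c. u \<in> E v \<Longrightarrow> g v = Some c \<Longrightarrow> g u \<noteq> Some c"
    and uncoloured: "\<And>v. v \<in> P \<Longrightarrow> g v = None \<Longrightarrow> v \<in> U \<and> card (E v) < w"
  shows "\<exists>f. (\<forall>v\<in>P. f v < w) \<and> (\<forall>v c. g v = Some c \<longrightarrow> f v = c) \<and> (\<forall>v\<in>P. \<forall>u\<in>E v. f v \<noteq> f u)"
  using assms(1) g_range g_proper uncoloured
proof (induction U arbitrary: g rule: finite_induct)
  case empty
  have coloured: "g v \<noteq> None" if "v \<in> P" for v using empty.prems(3) that by blast
  let ?f = "\<lambda>v. case g v of Some c \<Rightarrow> c | None \<Rightarrow> 0"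
  have "?f v \<noteq> ?f u" if v: "v \<in> P" and u: "u \<in> E v" for u v
  proof -
    obtain cv cu where "g v = Some cv" "g u = Some cu"
      using coloured[of v] coloured[of u] E(1)[of v] v u by blast
    then show ?thesis using empty.prems(2)[OF u] by auto
  qed
  with coloured empty.prems(1) show ?case by (intro exI[of _ ?f]) force
next
  case (insert a U)
  show ?case
  proof (cases "a \<in> P \<and> g a = None")
    case False
    with insert.prems show ?thesis by (intro insert.IH; blast)
  next
    case True
    have "finite (E a)" using E(1)[of a] \<open>finite P\<close> by (meson finite_Diff finite_subset)
    moreover have "card (E a) < w" using insert.prems(3) True by blast
    ultimately obtain c where c: "c < w" "\<And>u. u \<in> E a \<Longrightarrow> g u \<noteq> Some c"
      by (rule exists_colour_avoiding[where g = g]) blast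
    have "\<exists>f. (\<forall>v\<in>P. f v < w) \<and> (\<forall>v c'. (g(a \<mapsto> c)) v = Some c' \<longrightarrow> f v = c')
        \<and> (\<forall>v\<in>P. \<forall>u\<in>E v. f v \<noteq> f u)"
    proof (rule insert.IH)
      show "(g(a \<mapsto> c)) v = Some c' \<Longrightarrow> c' < w" for v c' using insert.prems(1) c(1) by (auto split: if_splits)
      show "(g(a \<mapsto> c)) u \<noteq> Some c'" if "u \<in> E v" "(g(a \<mapsto> c)) v = Some c'" for u v c'
        using that c(2) E insert.prems(2) by (auto split: if_splits; blast)
      show "v \<in> U \<and> card (E v) < w" if "v \<in> P" "(g(a \<mapsto> c)) v = None" for v
        using that insert.prems(3) by (auto split: if_splits)
    qed
    then show ?thesis using True by (metis fun_upd_other option.distinct(1))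
  qed
qed

section \<open>The adversary\<close>

text \<open>nbrs records the pairs answered incomparable while one of them was uncoloured, colour
  the chain an element has been put into, stamp the time at which it was coloured, and upper
  the elements that have been answered to lie above another one.\<close>
record 'a adv_state =
  nbrs :: "'a \<Rightarrow> 'a set"
  colour :: "'a \<rightharpoonup> nat"
  stamp :: "'a \<Rightarrow> nat"
  clock :: nat
  upper :: "'a set"

definition adv_le :: "'a adv_state \<Rightarrow> 'a adv_state \<Rightarrow> bool" where
  "adv_le s t \<longleftrightarrow> colour s \<subseteq>\<^sub>m colour t \<and> (\<forall>v\<in>dom (colour s). stamp t v = stamp s v)
     \<and> (\<forall>v. nbrs s v \<subseteq> nbrs t v) \<and> upper s \<subseteq> upper t"

lemma reflp_adv_le: "reflp adv_le"
  by (rule reflpI) (simp add: adv_le_def)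

lemma transp_adv_le: "transp adv_le"
  by (rule transpI) (auto simp: adv_le_def map_le_def dom_def, blast)

definition add_edge :: "'a \<Rightarrow> 'a \<Rightarrow> 'a adv_state \<Rightarrow> 'a adv_state" where
  "add_edge x y t = t\<lparr>nbrs := (nbrs t)(x := insert y (nbrs t x), y := insert x (nbrs t y))\<rparr>"

lemma add_edge_simps [simp]:
  "colour (add_edge x y t) = colour t" "stamp (add_edge x y t) = stamp t"
  "clock (add_edge x y t) = clock t" "upper (add_edge x y t) = upper t"
  by (simp_all add: add_edge_def)

lemma nbrs_add_edge:
  "nbrs (add_edge x y t) v = (if v = x then insert y (nbrs t x) else if v = y then insert x (nbrs t y) else nbrs t v)"
  by (simp add: add_edge_def)

lemma adv_le_add_edge: "adv_le t (add_edge x y t)"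
  by (auto simp: adv_le_def nbrs_add_edge)

definition adv_init :: "'a adv_state" where
  "adv_init = \<lparr>nbrs = \<lambda>_. {}, colour = Map.empty, stamp = \<lambda>_. 0, clock = 0, upper = {}\<rparr>"

locale minima_adversary =
  fixes P :: "'a set" and w :: nat
  assumes finite_P: "finite P" and w_pos: "1 \<le> w"
begin

abbreviation has_unused_colour :: "'a adv_state \<Rightarrow> bool" where
  "has_unused_colour s \<equiv> \<exists>c<w. c \<notin> ran (colour s)"

definition new_colour :: "'a adv_state \<Rightarrow> 'a \<Rightarrow> nat" where
  "new_colour s z = (if has_unused_colour s then SOME c. c < w \<and> c \<notin> ran (colour s)
     else SOME c. c < w \<and> (\<forall>u\<in>nbrs s z. colour s u \<noteq> Some c))"

definition settle :: "'a \<Rightarrow> 'a adv_state \<Rightarrow> 'a adv_state" where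
  "settle z s = (if z \<in> P \<and> colour s z = None \<and> w - 1 \<le> card (nbrs s z)
     then s\<lparr>colour := (colour s)(z \<mapsto> new_colour s z), stamp := (stamp s)(z := clock s),
            clock := Suc (clock s)\<rparr>
     else s)"

definition compare :: "'a \<Rightarrow> 'a \<Rightarrow> 'a adv_state \<Rightarrow> answer \<times> 'a adv_state" where
  "compare x y t = (if colour t x \<noteq> None \<and> colour t y \<noteq> None then
       (if colour t x \<noteq> colour t y then (Inc, t)
        else if stamp t y < stamp t x then (Gt, t\<lparr>upper := insert x (upper t)\<rparr>)
        else (Lt, t\<lparr>upper := insert y (upper t)\<rparr>))
     else (Inc, add_edge x y t))"

definition respond :: "'a adv_state \<Rightarrow> 'a \<Rightarrow> 'a \<Rightarrow> answer \<times> 'a adv_state" where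
  "respond s x y =
     (if x = y \<or> x \<notin> P \<or> y \<notin> P then (Inc, s) else compare x y (settle y (settle x s)))"

definition potential :: "'a adv_state \<Rightarrow> nat" where
  "potential s = (\<Sum>v\<in>P. card (nbrs s v)) + 2 * card (upper s)"

definition graph_inv :: "'a adv_state \<Rightarrow> bool" where
  "graph_inv s \<longleftrightarrow> (\<forall>v. nbrs s v \<subseteq> P - {v}) \<and> (\<forall>u v. u \<in> nbrs s v \<longrightarrow> v \<in> nbrs s u)"

definition colouring_inv :: "'a adv_state \<Rightarrow> bool" where
  "colouring_inv s \<longleftrightarrow>
     (\<forall>v c. colour s v = Some c \<longrightarrow> c < w \<and> v \<in> P \<and> w - 1 \<le> card (nbrs s v) \<and> stamp s v < clock s)
   \<and> (\<forall>v\<in>P. colour s v = None \<longrightarrow> card (nbrs s v) \<le> w - 1)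
   \<and> (\<forall>u v c. u \<in> nbrs s v \<longrightarrow> colour s v = Some c \<longrightarrow> colour s u \<noteq> Some c)
   \<and> inj_on (stamp s) (dom (colour s))"

text \<open>As long as some colour is unused, every chain has at most one element, so no
  comparability has been reported yet.\<close>
definition upper_inv :: "'a adv_state \<Rightarrow> bool" where
  "upper_inv s \<longleftrightarrow> upper s \<subseteq> dom (colour s) \<and> (upper s \<noteq> {} \<longrightarrow> \<not> has_unused_colour s)
     \<and> (has_unused_colour s \<longrightarrow> inj_on (colour s) (dom (colour s)))"

definition adv_inv :: "'a adv_state \<Rightarrow> bool" where
  "adv_inv s \<longleftrightarrow> graph_inv s \<and> colouring_inv s \<and> upper_inv s"

lemma adv_inv_init: "adv_inv adv_init"
  by (simp add: adv_init_def adv_inv_def graph_inv_def colouring_inv_def upper_inv_def)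

lemma finite_nbrs: "graph_inv s \<Longrightarrow> finite (nbrs s v)"
  using finite_P by (auto simp: graph_inv_def intro: finite_subset)

lemma new_colour_unused:
  "has_unused_colour s \<Longrightarrow> new_colour s z < w \<and> new_colour s z \<notin> ran (colour s)"
  using someI_ex[of "\<lambda>c. c < w \<and> c \<notin> ran (colour s)"] by (auto simp: new_colour_def)

lemma new_colour_avoids_nbrs:
  assumes "graph_inv s" "colouring_inv s" "z \<in> P" "colour s z = None"
  shows "new_colour s z < w" and "u \<in> nbrs s z \<Longrightarrow> colour s u \<noteq> Some (new_colour s z)"
proof -
  have "card (nbrs s z) < w"
    using assms w_pos by (auto simp: colouring_inv_def)
  then obtain c where "c < w" "\<And>u. u \<in> nbrs s z \<Longrightarrow> colour s u \<noteq> Some c"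
    using exists_colour_avoiding[OF finite_nbrs[OF assms(1)]] by metis
  then have "\<exists>c. c < w \<and> (\<forall>u\<in>nbrs s z. colour s u \<noteq> Some c)" by blast
  from someI_ex[OF this] new_colour_unused[of s z]
  show "new_colour s z < w" and "u \<in> nbrs s z \<Longrightarrow> colour s u \<noteq> Some (new_colour s z)"
    by (auto simp: new_colour_def ran_def)
qed

lemma settle_simps [simp]: "nbrs (settle z s) = nbrs s" "upper (settle z s) = upper s"
  by (simp_all add: settle_def)

lemma adv_le_settle: "adv_le s (settle z s)"
  by (auto simp: settle_def adv_le_def map_le_def)

lemma colour_settle_None:
  assumes "colour (settle z s) v = None"
  shows "colour s v = None" and "v = z \<Longrightarrow> z \<in> P \<Longrightarrow> card (nbrs s z) < w - 1"
  using assms by (auto simp: settle_def split: if_splits)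

lemma graph_inv_settle: "graph_inv (settle z s) = graph_inv s"
  by (simp add: graph_inv_def)

lemma colouring_inv_settle:
  assumes g: "graph_inv s" and c: "colouring_inv s"
  shows "colouring_inv (settle z s)"
proof (cases "z \<in> P \<and> colour s z = None \<and> w - 1 \<le> card (nbrs s z)")
  case True
  let ?c = "new_colour s z" and ?t = "settle z s"
  have t: "colour ?t = (colour s)(z \<mapsto> ?c)" "stamp ?t = (stamp s)(z := clock s)"
    "clock ?t = Suc (clock s)" "nbrs ?t = nbrs s"
    using True by (simp_all add: settle_def)
  have avoid: "?c < w" "\<And>u. u \<in> nbrs s z \<Longrightarrow> colour s u \<noteq> Some ?c"
    using new_colour_avoids_nbrs[OF g c] True by auto
  have old: "\<And>v c'. colour s v = Some c' \<Longrightarrow> c' < w \<and> v \<in> P \<and> w - 1 \<le> card (nbrs s v) \<and> stamp s v < clock s"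
    and proper: "\<And>u v c'. u \<in> nbrs s v \<Longrightarrow> colour s v = Some c' \<Longrightarrow> colour s u \<noteq> Some c'"
    and stamps: "inj_on (stamp s) (dom (colour s))"
    using c by (auto simp: colouring_inv_def)
  have "z \<notin> nbrs s z" using g by (auto simp: graph_inv_def)
  moreover have "u \<in> nbrs s z" if "z \<in> nbrs s u" for u using g that by (auto simp: graph_inv_def)
  ultimately have "u \<in> nbrs s v \<Longrightarrow> colour ?t v = Some c' \<Longrightarrow> colour ?t u \<noteq> Some c'" for u v c'
    using avoid(2) proper unfolding t by (cases "u = z"; cases "v = z") fastforce+
  moreover have "inj_on (stamp ?t) (dom (colour ?t))"
  proof -
    have "stamp s v < clock s" if "v \<in> dom (colour s)" for v using old that by blast
    then show ?thesis using stamps True unfolding t by (auto simp: inj_on_def; metis domI less_irrefl)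
  qed
  ultimately show ?thesis
    using c True avoid(1) old unfolding colouring_inv_def t by (auto split: if_splits intro: less_SucI)
qed (auto simp: settle_def c)

lemma upper_inv_settle:
  assumes "upper_inv s"
  shows "upper_inv (settle z s)"
proof (cases "z \<in> P \<and> colour s z = None \<and> w - 1 \<le> card (nbrs s z)")
  case True
  let ?c = "new_colour s z" and ?t = "settle z s"
  have t: "colour ?t = (colour s)(z \<mapsto> ?c)" "upper ?t = upper s"
    using True by (simp_all add: settle_def)
  have ran: "ran (colour ?t) = insert ?c (ran (colour s))"
    using True unfolding t by (simp add: ran_map_upd)
  have "inj_on (colour ?t) (dom (colour ?t))" if unused: "has_unused_colour ?t"
  proof -
    have "has_unused_colour s" using unused ran by auto
    then have "?c \<notin> ran (colour s)" "inj_on (colour s) (dom (colour s))"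
      using new_colour_unused assms by (auto simp: upper_inv_def)
    then show ?thesis using True unfolding t by (auto simp: inj_on_def ran_def dom_def)
  qed
  then show ?thesis using assms ran unfolding upper_inv_def t by auto
qed (auto simp: settle_def assms)

lemma adv_inv_settle: "adv_inv s \<Longrightarrow> adv_inv (settle z s)"
  by (simp add: adv_inv_def graph_inv_settle colouring_inv_settle upper_inv_settle)

lemma adv_inv_add_edge:
  assumes inv: "adv_inv t" and xy: "x \<noteq> y" "x \<in> P" "y \<in> P"
    and uncoloured: "colour t x = None \<or> colour t y = None"
    and settled: "\<And>v. v \<in> {x, y} \<Longrightarrow> colour t v = None \<Longrightarrow> card (nbrs t v) < w - 1"
  shows "adv_inv (add_edge x y t)"
proof -
  let ?t = "add_edge x y t"
  have g: "graph_inv t" and c: "colouring_inv t" and u: "upper_inv t"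
    using inv by (auto simp: adv_inv_def)
  have fin: "finite (nbrs t v)" for v using finite_nbrs[OF g] .
  have g': "graph_inv ?t" using g xy by (auto simp: graph_inv_def nbrs_add_edge)
  have "card (nbrs t v) \<le> card (nbrs ?t v)" for v
    using fin by (auto simp: nbrs_add_edge intro: card_mono)
  moreover have "card (nbrs ?t v) \<le> w - 1" if "v \<in> P" "colour t v = None" for v
    using c settled[of v] that fin by (auto simp: colouring_inv_def nbrs_add_edge card_insert_if)
  moreover have "colour t u \<noteq> Some c'" if "u \<in> nbrs ?t v" "colour t v = Some c'" for u v c'
    using c uncoloured that by (auto simp: colouring_inv_def nbrs_add_edge split: if_splits)
  ultimately have "colouring_inv ?t"
    using c by (auto simp: colouring_inv_def) (meson le_trans)
  moreover have "upper_inv ?t" using u by (simp add: upper_inv_def)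
  ultimately show ?thesis using g' by (simp add: adv_inv_def)
qed

lemma adv_inv_mark_upper:
  assumes inv: "adv_inv t" and "x \<noteq> y" "colour t x = colour t y" "colour t x \<noteq> None" "u \<in> {x, y}"
  shows "adv_inv (t\<lparr>upper := insert u (upper t)\<rparr>)"
proof -
  have "\<not> inj_on (colour t) (dom (colour t))" using assms(2-4) by (force simp: inj_on_def dom_def)
  then show ?thesis using inv assms(3-5) by (auto simp: adv_inv_def graph_inv_def colouring_inv_def upper_inv_def)
qed

lemma potential_add_edge:
  assumes "graph_inv t" and "x \<in> P" "y \<in> P" "x \<noteq> y"
  shows "potential (add_edge x y t) \<le> potential t + 2"
proof -
  have "(\<Sum>v\<in>P. card (nbrs (add_edge x y t) v)) \<le> (\<Sum>v\<in>P. card (nbrs t v) + (if v \<in> {x, y} then 1 else 0))"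
    using finite_nbrs[OF assms(1)] by (intro sum_mono) (auto simp: nbrs_add_edge card_insert_if)
  also have "\<dots> = (\<Sum>v\<in>P. card (nbrs t v)) + card (P \<inter> {x, y})"
    using finite_P by (simp add: sum.distrib sum.If_cases Int_def)
  also have "card (P \<inter> {x, y}) = 2" using assms(2-4) by (simp add: Int_absorb1)
  finally show ?thesis by (simp add: potential_def)
qed

lemma potential_mark_upper:
  assumes "upper t \<subseteq> P"
  shows "potential (t\<lparr>upper := insert u (upper t)\<rparr>) \<le> potential t + 2"
  using finite_subset[OF assms finite_P] by (simp add: potential_def card_insert_if)

lemma upper_subset: "adv_inv t \<Longrightarrow> upper t \<subseteq> P"
  by (auto simp: adv_inv_def upper_inv_def colouring_inv_def)

lemma compare_invariant:
  assumes inv: "adv_inv t" and xy: "x \<noteq> y" "x \<in> P" "y \<in> P"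
    and settled: "\<And>v. v \<in> {x, y} \<Longrightarrow> colour t v = None \<Longrightarrow> card (nbrs t v) < w - 1"
  defines "t' \<equiv> snd (compare x y t)"
  shows "adv_inv t'" and "adv_le t t'" and "potential t' \<le> potential t + 2"
proof -
  have "adv_inv t' \<and> adv_le t t' \<and> potential t' \<le> potential t + 2"
  proof (cases "colour t x \<noteq> None \<and> colour t y \<noteq> None")
    case False
    then have t': "t' = add_edge x y t" by (auto simp: t'_def compare_def)
    have g: "graph_inv t" using inv by (simp add: adv_inv_def)
    have "colour t x = None \<or> colour t y = None" using False by simp
    then show ?thesis unfolding t'
      using adv_inv_add_edge[OF inv xy _ settled] adv_le_add_edge[of t x y] potential_add_edge[OF g xy(2,3,1)]
      by blast
  next
    case coloured: True
    show ?thesis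
    proof (cases "colour t x = colour t y")
      case False
      then have "t' = t" using coloured by (simp add: t'_def compare_def)
      then show ?thesis using inv by (simp add: reflpD[OF reflp_adv_le])
    next
      case True
      define u where "u = (if stamp t y < stamp t x then x else y)"
      then have "t' = t\<lparr>upper := insert u (upper t)\<rparr>" "u \<in> {x, y}"
        using coloured True by (auto simp: t'_def compare_def)
      then show ?thesis
        using adv_inv_mark_upper[OF inv xy(1) True] coloured potential_mark_upper[OF upper_subset[OF inv]]
        by (auto simp: adv_le_def)
    qed
  qed
  then show "adv_inv t'" and "adv_le t t'" and "potential t' \<le> potential t + 2" by auto
qed

lemma card_nbrs_settled:
  assumes "x \<in> P" "y \<in> P" "v \<in> {x, y}" "colour (settle y (settle x s)) v = None"
  shows "card (nbrs (settle y (settle x s)) v) < w - 1"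
  using assms colour_settle_None[of y "settle x s" v] colour_settle_None[of x s v] by auto

lemma respond_invariant:
  fixes x y :: 'a
  assumes inv: "adv_inv s"
  defines "s' \<equiv> snd (respond s x y)"
  shows "adv_inv s'" and "adv_le s s'" and "potential s' \<le> potential s + 2"
proof -
  have "adv_inv s' \<and> adv_le s s' \<and> potential s' \<le> potential s + 2"
  proof (cases "x = y \<or> x \<notin> P \<or> y \<notin> P")
    case True
    then show ?thesis using inv by (simp add: s'_def respond_def reflpD[OF reflp_adv_le])
  next
    case False
    let ?t = "settle y (settle x s)"
    have t: "adv_inv ?t" "adv_le s ?t" "potential ?t = potential s"
      using adv_inv_settle[OF adv_inv_settle[OF inv]]
        transpD[OF transp_adv_le adv_le_settle adv_le_settle]
      by (auto simp: potential_def)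
    have xy: "x \<noteq> y" "x \<in> P" "y \<in> P" and s': "s' = snd (compare x y ?t)"
      using False by (auto simp: s'_def respond_def)
    note c = compare_invariant[OF t(1) xy card_nbrs_settled[OF xy(2,3)], folded s']
    have "potential s' \<le> potential s + 2" using c(3) t(3) by linarith
    then show ?thesis using c(1) transpD[OF transp_adv_le t(2) c(2)] by blast
  qed
  then show "adv_inv s'" and "adv_le s s'" and "potential s' \<le> potential s + 2" by auto
qed

definition total_colouring :: "'a adv_state \<Rightarrow> ('a \<Rightarrow> nat) \<Rightarrow> bool" where
  "total_colouring s f \<longleftrightarrow> (\<forall>v\<in>P. f v < w) \<and> (\<forall>v c. colour s v = Some c \<longrightarrow> f v = c)
     \<and> (\<forall>v\<in>P. \<forall>u\<in>nbrs s v. f v \<noteq> f u)"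

definition final_colouring :: "'a adv_state \<Rightarrow> 'a \<Rightarrow> nat" where
  "final_colouring s = (SOME f. total_colouring s f)"

text \<open>Within a chain, coloured elements are ordered by the time they were coloured and all
  uncoloured ones lie above them.\<close>
definition key :: "'a adv_state \<Rightarrow> 'a \<Rightarrow> nat" where
  "key s v = (case colour s v of Some _ \<Rightarrow> stamp s v | None \<Rightarrow> clock s + to_nat_on P v)"

definition adv_order :: "'a adv_state \<Rightarrow> 'a \<Rightarrow> 'a \<Rightarrow> bool" where
  "adv_order s = chain_order P (final_colouring s) (key s)"

lemma total_colouring_final_colouring:
  assumes "adv_inv s"
  shows "total_colouring s (final_colouring s)"
proof -
  have g: "graph_inv s" and c: "colouring_inv s" using assms by (auto simp: adv_inv_def)
  have "\<exists>f. total_colouring s f"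
    unfolding total_colouring_def
  proof (rule proper_colouring_extends[OF finite_P finite_P])
    show "\<And>v. nbrs s v \<subseteq> P - {v}" "\<And>u v. u \<in> nbrs s v \<Longrightarrow> v \<in> nbrs s u"
      using g by (auto simp: graph_inv_def)
    show "\<And>v c. colour s v = Some c \<Longrightarrow> c < w"
      "\<And>u v c. u \<in> nbrs s v \<Longrightarrow> colour s v = Some c \<Longrightarrow> colour s u \<noteq> Some c"
      using c by (auto simp: colouring_inv_def)
    show "\<And>v. v \<in> P \<Longrightarrow> colour s v = None \<Longrightarrow> v \<in> P \<and> card (nbrs s v) < w"
      using c w_pos by (force simp: colouring_inv_def)
  qed
  then show ?thesis unfolding final_colouring_def by (rule someI_ex)
qed

lemma inj_on_key:
  assumes "adv_inv s"
  shows "inj_on (key s) P"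
proof (rule inj_onI)
  fix u v assume uv: "u \<in> P" "v \<in> P" "key s u = key s v"
  have stamps: "inj_on (stamp s) (dom (colour s))" "\<And>v. v \<in> dom (colour s) \<Longrightarrow> stamp s v < clock s"
    using assms by (auto simp: adv_inv_def colouring_inv_def)
  have rank: "inj_on (to_nat_on P) P" using countable_finite[OF finite_P] by (rule inj_on_to_nat_on)
  have coloured: "key s v = stamp s v" "stamp s v < clock s" if "v \<in> dom (colour s)" for v
    using that stamps(2) by (auto simp: key_def)
  have uncoloured: "key s v = clock s + to_nat_on P v" if "v \<notin> dom (colour s)" for v
    using that by (simp add: key_def domIff)
  show "u = v"
  proof (cases "u \<in> dom (colour s)"; cases "v \<in> dom (colour s)")
    assume "u \<in> dom (colour s)" "v \<in> dom (colour s)"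
    then show ?thesis using uv(3) coloured stamps(1) by (metis inj_onD)
  next
    assume "u \<notin> dom (colour s)" "v \<notin> dom (colour s)"
    then show ?thesis using uv uncoloured rank by (metis add_left_cancel inj_onD)
  qed (use uv(3) coloured uncoloured in \<open>fastforce+\<close>)
qed

lemma poset_on_adv_order: "poset_on P (adv_order s)"
  by (simp add: adv_order_def poset_on_chain_order)

lemma width_adv_order: "adv_inv s \<Longrightarrow> width P (adv_order s) \<le> w"
  unfolding adv_order_def
  using width_chain_order_le[OF finite_P inj_on_key] total_colouring_final_colouring
  by (simp add: total_colouring_def)

lemma final_colouring_coloured:
  assumes "adv_inv sf" "adv_le t sf" "colour t v = Some c"
  shows "final_colouring sf v = c" and "key sf v = stamp t v"
proof -
  have "colour sf v = Some c" "stamp sf v = stamp t v"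
    using assms(2,3) by (auto simp: adv_le_def map_le_def dom_def)
  then show "final_colouring sf v = c" and "key sf v = stamp t v"
    using total_colouring_final_colouring[OF assms(1)] by (auto simp: total_colouring_def key_def)
qed

lemma respond_consistent:
  assumes "adv_inv s" and resp: "respond s x y = (a, s')" and "adv_le s' sf" and "adv_inv sf"
  shows "answer_of (adv_order sf) x y = a"
proof (cases "x = y \<or> x \<notin> P \<or> y \<notin> P")
  case True
  then show ?thesis using resp by (auto simp: respond_def answer_of_def adv_order_def chain_order_def)
next
  case False
  let ?t = "settle y (settle x s)" and ?f = "final_colouring sf" and ?R = "adv_order sf"
  have xy: "x \<noteq> y" "x \<in> P" "y \<in> P" and cmp: "compare x y ?t = (a, s')"
    using False resp by (auto simp: respond_def)
  have inv_t: "adv_inv ?t" using assms(1) by (intro adv_inv_settle)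
  have "adv_le ?t s'"
    using compare_invariant(2)[OF inv_t xy card_nbrs_settled[OF xy(2,3)]] cmp by simp
  then have le: "adv_le ?t sf" using assms(3) transp_adv_le by (blast dest: transpD)
  show ?thesis
  proof (cases "colour ?t x \<noteq> None \<and> colour ?t y \<noteq> None")
    case True
    then obtain cx cy where c: "colour ?t x = Some cx" "colour ?t y = Some cy" by auto
    note fk = final_colouring_coloured[OF assms(4) le c(1)] final_colouring_coloured[OF assms(4) le c(2)]
    have "inj_on (stamp ?t) (dom (colour ?t))" using inv_t by (simp add: adv_inv_def colouring_inv_def)
    then have "stamp ?t x \<noteq> stamp ?t y" using c xy(1) by (metis domI inj_onD)
    then show ?thesis
      using cmp c xy fk by (auto simp: compare_def adv_order_def chain_order_def answer_of_def)
  next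
    case False
    then have "s' = add_edge x y ?t" "a = Inc" using cmp by (auto simp: compare_def)
    then have "y \<in> nbrs s' x" by (simp add: nbrs_add_edge)
    then have "y \<in> nbrs sf x" using assms(3) by (auto simp: adv_le_def)
    then have "?f x \<noteq> ?f y"
      using total_colouring_final_colouring[OF assms(4)] xy by (auto simp: total_colouring_def)
    then show ?thesis using \<open>a = Inc\<close> by (auto simp: adv_order_def chain_order_def answer_of_def)
  qed
qed

lemma respond_Gt: "respond s x y = (Gt, s') \<Longrightarrow> x \<in> upper s'"
  by (auto simp: respond_def compare_def split: if_splits)

lemma respond_Lt: "respond s x y = (Lt, s') \<Longrightarrow> y \<in> upper s'"
  by (auto simp: respond_def compare_def split: if_splits)

lemma respond_nbrs:
  assumes "respond s x y = (a, s')" "x \<noteq> y" "x \<in> P" "y \<in> P" "colour s' x = None \<or> colour s' y = None"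
  shows "y \<in> nbrs s' x"
  using assms by (auto simp: respond_def compare_def nbrs_add_edge split: if_splits)

end

section \<open>The lower bound\<close>

locale correct_minima_algorithm = minima_adversary +
  fixes T :: "'a qtree"
  assumes w_le_card: "w \<le> card P"
    and correct: "\<forall>R. poset_on P R \<and> width P R \<le> w \<longrightarrow> fst (run T R) = minimal_elements P R"
begin

definition play_output :: "'a set" where "play_output = fst (play respond T adv_init)"
definition transcript :: "('a \<times> 'a \<times> answer) list" where "transcript = fst (snd (play respond T adv_init))"
definition final_state :: "'a adv_state" where "final_state = snd (snd (play respond T adv_init))"

lemma play_adv_init: "play respond T adv_init = (play_output, transcript, final_state)"
  by (simp add: play_output_def transcript_def final_state_def)

lemma respond_step: "adv_inv s \<Longrightarrow> respond s x y = (a, s') \<Longrightarrow> adv_inv s' \<and> adv_le s s'"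
  using respond_invariant[of s x y] by simp

lemma adv_inv_final: "adv_inv final_state"
  and transcript_respond:
    "\<forall>(x, y, a) \<in> set transcript. \<exists>s s'. adv_inv s \<and> respond s x y = (a, s') \<and> adv_le s' final_state"
  using play_invariant[OF respond_step reflp_adv_le transp_adv_le adv_inv_init play_adv_init] by auto

lemma potential_final: "potential final_state \<le> 2 * length transcript"
proof -
  have "adv_inv (snd (respond s x y)) \<and> potential (snd (respond s x y)) \<le> potential s + 2"
    if "adv_inv s" for s x y
    using respond_invariant[OF that] by blast
  from play_potential[OF this adv_inv_init play_adv_init]
  show ?thesis by (simp add: potential_def adv_init_def)
qed

lemma consistent_adv_order: "consistent transcript (adv_order final_state)"
  using transcript_respond respond_consistent adv_inv_final by (fastforce simp: consistent_def)

lemma run_adv_order: "run T (adv_order final_state) = (play_output, length transcript)"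
  by (rule run_play[OF play_adv_init consistent_adv_order])

lemma minimal_elements_eq_output:
  assumes "poset_on P R" "width P R \<le> w" "consistent transcript R"
  shows "minimal_elements P R = play_output"
  using correct assms run_play[OF play_adv_init assms(3)] by auto

lemma transcript_Gt: "(x, y, Gt) \<in> set transcript \<Longrightarrow> x \<in> upper final_state"
  using transcript_respond respond_Gt by (fastforce simp: adv_le_def)

lemma transcript_Lt: "(x, y, Lt) \<in> set transcript \<Longrightarrow> y \<in> upper final_state"
  using transcript_respond respond_Lt by (fastforce simp: adv_le_def)

lemma transcript_nbrs:
  assumes "(x, y, a) \<in> set transcript" "x \<noteq> y" "x \<in> P" "y \<in> P"
    and "colour final_state x = None \<or> colour final_state y = None"
  shows "y \<in> nbrs final_state x"
proof -
  obtain s s' where resp: "respond s x y = (a, s')" and le: "adv_le s' final_state"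
    using transcript_respond assms(1) by blast
  from le have "colour s' x = None \<or> colour s' y = None"
    using assms(5) by (auto simp: adv_le_def map_le_def dom_def)
  then have "y \<in> nbrs s' x" using respond_nbrs[OF resp assms(2-4)] by blast
  then show ?thesis using le by (auto simp: adv_le_def)
qed

lemma minimal_if_not_upper:
  assumes x: "x \<in> P" "x \<notin> upper final_state"
  shows "x \<in> minimal_elements P (adv_order final_state)"
proof -
  let ?f = "final_colouring final_state" and ?key = "key final_state"
  let ?R = "adv_order final_state" and ?R' = "chain_order P ?f (lower_key x ?key)"
  have inj: "inj_on ?key P" using inj_on_key[OF adv_inv_final] .
  have "answer_of ?R' a b = ans" if ab: "(a, b, ans) \<in> set transcript" for a b ans
  proof -
    have ans: "answer_of ?R a b = ans" using consistent_adv_order ab by (auto simp: consistent_def)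
    have "\<not> ?R x b" if "a = x"
    proof
      assume "?R x b"
      then have "ans = Gt" using ans that by (simp add: answer_of_def)
      then show False using transcript_Gt ab that x(2) by blast
    qed
    moreover have "\<not> ?R x a" if "b = x"
    proof
      assume "?R x a"
      then have "ans = Lt" using ans that by (auto simp: answer_of_def adv_order_def chain_order_def)
      then show False using transcript_Lt ab that x(2) by blast
    qed
    ultimately show ?thesis using answer_of_chain_order_lower_key[OF inj] ans by (simp add: adv_order_def)
  qed
  then have "consistent transcript ?R'" by (auto simp: consistent_def)
  moreover have "width P ?R' \<le> w"
    using width_chain_order_le[OF finite_P inj_on_lower_key[OF inj]]
      total_colouring_final_colouring[OF adv_inv_final]
    by (simp add: total_colouring_def)
  ultimately have "minimal_elements P ?R' = play_output"
    using minimal_elements_eq_output poset_on_chain_order by blast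
  moreover have "minimal_elements P ?R = play_output"
    using minimal_elements_eq_output[OF poset_on_adv_order width_adv_order[OF adv_inv_final] consistent_adv_order] .
  ultimately show ?thesis using minimal_elements_lower_key[OF x(1), of ?f ?key] by simp
qed

lemma has_unused_colour_if_minimal_uncoloured:
  assumes x: "x \<in> P" "colour final_state x = None"
    and min: "x \<in> minimal_elements P (adv_order final_state)"
  shows "has_unused_colour final_state"
proof (rule ccontr)
  let ?f = "final_colouring final_state"
  have tc: "total_colouring final_state ?f" using total_colouring_final_colouring[OF adv_inv_final] .
  assume "\<not> has_unused_colour final_state"
  moreover have "?f x < w" using tc x(1) by (simp add: total_colouring_def)
  ultimately obtain y where y: "colour final_state y = Some (?f x)" by (auto simp: ran_def)
  have "y \<in> P" "stamp final_state y < clock final_state"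
    using adv_inv_final y by (auto simp: adv_inv_def colouring_inv_def)
  moreover have "?f y = ?f x" using tc y by (simp add: total_colouring_def)
  ultimately have "adv_order final_state x y"
    using x y by (simp add: adv_order_def chain_order_def key_def)
  with min show False by (auto simp: minimal_elements_def)
qed

lemma answer_Inc_if_unused_colour:
  assumes "has_unused_colour final_state" and "(a, b, ans) \<in> set transcript"
  shows "ans = Inc"
proof -
  have "upper final_state = {}" using adv_inv_final assms(1) by (auto simp: adv_inv_def upper_inv_def)
  then show ?thesis using assms(2) transcript_Gt transcript_Lt by (cases ans) auto
qed

text \<open>Otherwise reversing the order would be consistent with all answers and would change the
  minimal elements.\<close>
lemma adv_order_empty_if_unused_colour:
  assumes "has_unused_colour final_state"
  shows "\<not> adv_order final_state a b"
proof -
  let ?R = "adv_order final_state" and ?R' = "\<lambda>x y. adv_order final_state y x"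
  have "consistent transcript ?R'"
    using consistent_adv_order answer_Inc_if_unused_colour[OF assms]
    by (fastforce simp: consistent_def answer_of_def split: if_splits)
  then have "minimal_elements P ?R' = minimal_elements P ?R"
    using minimal_elements_eq_output poset_on_adv_order poset_on_converse width_converse
      width_adv_order[OF adv_inv_final] consistent_adv_order
    by metis
  then show ?thesis
    by (rule no_relation_if_minimal_elements_converse[OF finite_P poset_on_adv_order])
qed

text \<open>Otherwise, for some z outside the neighbourhood of x, the order whose only relation is
  x above z would be consistent with all answers.\<close>
lemma nbrs_final_if_unused_colour:
  assumes unused: "has_unused_colour final_state"
    and x: "x \<in> P" "colour final_state x = None" "x \<in> minimal_elements P (adv_order final_state)"
  shows "P - {x} \<subseteq> nbrs final_state x"
proof
  fix z assume z: "z \<in> P - {x}"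
  let ?S = "\<lambda>u v. u = x \<and> v = z"
  have "antichain_in P (adv_order final_state) P"
    using adv_order_empty_if_unused_colour[OF unused] by (simp add: antichain_in_def incomparable_def)
  then have "width P ?S \<le> w"
    using width_le_card[OF finite_P] card_le_width[OF finite_P] width_adv_order[OF adv_inv_final]
    by (meson le_trans)
  moreover have "poset_on P ?S" using x z by (auto simp: poset_on_def)
  moreover have "x \<notin> minimal_elements P ?S" by (simp add: minimal_elements_def)
  moreover have "minimal_elements P (adv_order final_state) = play_output"
    using minimal_elements_eq_output[OF poset_on_adv_order width_adv_order[OF adv_inv_final] consistent_adv_order] .
  ultimately have "\<not> consistent transcript ?S" using minimal_elements_eq_output x(3) by metis
  then obtain a b ans where ab: "(a, b, ans) \<in> set transcript" and "answer_of ?S a b \<noteq> ans"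
    by (auto simp: consistent_def)
  then have "?S a b \<or> ?S b a"
    using answer_Inc_if_unused_colour[OF unused ab] by (auto simp: answer_of_def split: if_splits)
  then have "z \<in> nbrs final_state x \<or> x \<in> nbrs final_state z"
    using transcript_nbrs[OF ab] x(1,2) z by auto
  then show "z \<in> nbrs final_state x"
    using adv_inv_final by (auto simp: adv_inv_def graph_inv_def)
qed

lemma card_nbrs_final:
  assumes x: "x \<in> P"
  shows "w - 1 \<le> card (nbrs final_state x)"
proof (rule ccontr)
  assume low: "\<not> w - 1 \<le> card (nbrs final_state x)"
  have g: "graph_inv final_state" and c: "colouring_inv final_state" and u: "upper_inv final_state"
    using adv_inv_final by (auto simp: adv_inv_def)
  have uncoloured: "colour final_state x = None"
    using c low by (cases "colour final_state x") (auto simp: colouring_inv_def)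
  then have "x \<notin> upper final_state" using u by (auto simp: upper_inv_def)
  then have min: "x \<in> minimal_elements P (adv_order final_state)" using minimal_if_not_upper[OF x] by blast
  have "P - {x} \<subseteq> nbrs final_state x"
    using nbrs_final_if_unused_colour[OF has_unused_colour_if_minimal_uncoloured[OF x uncoloured min]
        x uncoloured min] .
  then have "card (P - {x}) \<le> card (nbrs final_state x)" using card_mono[OF finite_nbrs[OF g]] by blast
  with low w_le_card x finite_P show False by simp
qed

lemma length_transcript_lower_bound:
  "card P * (w - 1) + 2 * (card P - w) \<le> 2 * length transcript"
proof -
  let ?M = "minimal_elements P (adv_order final_state)"
  have "card P * (w - 1) \<le> (\<Sum>v\<in>P. card (nbrs final_state v))"
    using sum_mono[of P "\<lambda>_. w - 1", OF card_nbrs_final] by simp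
  moreover have "card P - w \<le> card (upper final_state)"
  proof -
    have "card ?M \<le> w"
      using card_minimal_elements_le_width[OF finite_P] width_adv_order[OF adv_inv_final] le_trans by blast
    moreover have "card (P - ?M) = card P - card ?M"
      by (rule card_Diff_subset) (auto simp: minimal_elements_def intro: finite_subset[OF _ finite_P])
    moreover have "P - ?M \<subseteq> upper final_state" using minimal_if_not_upper by blast
    then have "card (P - ?M) \<le> card (upper final_state)"
      using card_mono finite_subset[OF upper_subset[OF adv_inv_final] finite_P] by blast
    ultimately show ?thesis by linarith
  qed
  ultimately show ?thesis using potential_final by (simp add: potential_def)
qed

end

theorem theorem12:
  fixes P :: "'a set" and n w :: nat and T :: "'a qtree"
  assumes "finite P" and "card P = n"
    and "1 \<le> w" and "w \<le> n"
    and correct: "\<forall>R. poset_on P R \<and> width P R \<le> w \<longrightarrow>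
                     fst (run T R) = minimal_elements P R"
  shows "\<exists>R. poset_on P R \<and> width P R \<le> w \<and>
           real (snd (run T R)) \<ge> (real w + 1) / 2 * real n - real w"
proof -
  interpret correct_minima_algorithm P w T
    using assms by unfold_locales auto
  let ?R = "adv_order final_state"
  have "n * (w - 1) + 2 * (n - w) \<le> 2 * length transcript"
    using length_transcript_lower_bound assms(2) by simp
  then have "real (n * (w - 1) + 2 * (n - w)) \<le> real (2 * length transcript)"
    by (simp only: of_nat_le_iff)
  then have "(real w + 1) / 2 * real n - real w \<le> real (length transcript)"
    using assms(3,4) by (simp add: of_nat_diff field_simps)
  then show ?thesis
    using poset_on_adv_order width_adv_order[OF adv_inv_final] run_adv_order by (intro exI[of _ ?R]) simp
qed

end
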